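(* For every set $E\subset\mathbb R^+$, $$\mathrm{Dim}_\mathrm{H}E=\inf\Big\{\rho\ge0:\sum_{n\ge1}\widetilde\nu^n_\rho(E)<\infty\Big\},$$ where for $n\ge1$ and $\rho\ge0$, $$\widetilde\nu^n_\rho(E)=\inf\Big\{\sum_{i=1}^m\Big(\frac{|Q_i|}{2^n}\Big)^\rho: Q_i\subset\mathcal S_n \text{ intervals with integer endpoints},\ \frac{|Q_i|}{n^2}\in\mathbb N^*,\ E\cap\mathcal S_n\subset\bigcup_{i=1}^m Q_i\Big\}$$ (infimum over finite families).
   Context: $|Q|$ denotes the length of an interval $Q$, and $\mathbb N^*$ the positive integers. Let $\mathcal S_n=[2^{n-1},2^n)$ for $n\ge1$. For $E\subset\mathbb R^+$, $\rho\ge0$ and $n\ge1$, let $$\nu^n_\rho(E)=\inf\Big\{\sum_{i=1}^m\Big(\frac{|Q_i|}{2^n}\Big)^\rho: Q_i\subset\mathcal S_n \text{ non-trivial intervals with integer endpoints},\ E\cap\mathcal S_n\subset\bigcup_{i=1}^m Q_i\Big\},$$ the infimum being over finite families. The macroscopic Hausdorff dimension is $\mathrm{Dim}_\mathrm{H}E=\inf\{\rho\ge0:\sum_{n\ge1}\nu^n_\rho(E)<\infty\}$. *)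

theory Defs
  imports "HOL-Analysis.Analysis"
begin

definition shell :: "nat \<Rightarrow> real set" where
  "shell n = {2 ^ (n - 1) ..< 2 ^ n}"

text \<open>Non-trivial interval (open, closed or half-open) with integer endpoints a < b.\<close>
definition int_interval :: "real set \<Rightarrow> bool" where
  "int_interval Q \<longleftrightarrow>
     (\<exists>a b :: int. a < b \<and> {real_of_int a <..< real_of_int b} \<subseteq> Q
                   \<and> Q \<subseteq> {real_of_int a .. real_of_int b})"

definition ilen :: "real set \<Rightarrow> real" where
  "ilen Q = Sup Q - Inf Q"

text \<open>nu^n_rho(E), valued in [0,\<infinity>] (Inf of the empty set is \<infinity>).\<close>
definition nu :: "nat \<Rightarrow> real \<Rightarrow> real set \<Rightarrow> ennreal" where
  "nu n \<rho> E = Inf {ennreal (\<Sum>Q\<in>QQ. (ilen Q / 2 ^ n) powr \<rho>) | QQ.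
      finite QQ \<and> (\<forall>Q\<in>QQ. int_interval Q \<and> Q \<subseteq> shell n) \<and> E \<inter> shell n \<subseteq> \<Union>QQ}"

definition nu_tilde :: "nat \<Rightarrow> real \<Rightarrow> real set \<Rightarrow> ennreal" where
  "nu_tilde n \<rho> E = Inf {ennreal (\<Sum>Q\<in>QQ. (ilen Q / 2 ^ n) powr \<rho>) | QQ.
      finite QQ \<and> (\<forall>Q\<in>QQ. int_interval Q \<and> Q \<subseteq> shell n
                        \<and> (\<exists>k::nat. k \<ge> 1 \<and> ilen Q = real k * real n ^ 2))
      \<and> E \<inter> shell n \<subseteq> \<Union>QQ}"

text \<open>Macroscopic Hausdorff dimension (extended real; Inf of empty set is \<infinity>).\<close>
definition DimH :: "real set \<Rightarrow> ereal" where
  "DimH E = Inf {ereal \<rho> | \<rho>. \<rho> \<ge> 0 \<and> (\<Sum>n. nu (Suc n) \<rho> E) < \<infinity>}"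

end

theory Submission
  imports Defs "HOL-Real_Asymp.Real_Asymp"
begin

text \<open>A \<open>nu_tilde\<close>-cover is a \<open>nu\<close>-cover, so \<open>nu n \<rho> E \<le> nu_tilde n \<rho> E\<close>, and the finitely
  many shells skipped on the right-hand side have finite \<open>nu\<close>-cost. Conversely, once
  \<open>2 n\<^sup>2 \<le> 2\<^sup>n\<close>, an integer interval \<open>Q \<subseteq> shell n\<close> of length \<open>\<ell> \<ge> 1\<close> is covered by at most two
  admissible intervals with lengths in \<open>n\<^sup>2 \<nat>\<close>: two of length \<open>\<lfloor>\<ell>/n\<^sup>2\<rfloor> n\<^sup>2 \<le> \<ell>\<close> anchored at the
  endpoints of \<open>Q\<close> if \<open>\<ell> \<ge> n\<^sup>2\<close>, and one of length \<open>n\<^sup>2\<close> containing \<open>Q\<close> otherwise. As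
  \<open>(n\<^sup>2/2\<^sup>n) powr (\<rho> + \<epsilon>) \<le> (1/2\<^sup>n) powr \<rho>\<close> for large \<open>n\<close>, no new interval costs more at exponent
  \<open>\<rho> + \<epsilon>\<close> than \<open>Q\<close> does at exponent \<open>\<rho>\<close>; hence \<open>nu_tilde n (\<rho> + \<epsilon>) E \<le> 2 * nu n \<rho> E\<close> and the
  two critical exponents coincide.\<close>

definition tilde_interval :: "nat \<Rightarrow> real set \<Rightarrow> bool" where
  "tilde_interval n J \<longleftrightarrow> int_interval J \<and> J \<subseteq> shell n \<and>
     (\<exists>k::nat. k \<ge> 1 \<and> ilen J = real k * real n ^ 2)"

lemma nu_tilde_eq:
  "nu_tilde n \<rho> E = Inf {ennreal (\<Sum>Q\<in>QQ. (ilen Q / 2 ^ n) powr \<rho>) | QQ.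
      finite QQ \<and> (\<forall>Q\<in>QQ. tilde_interval n Q) \<and> E \<inter> shell n \<subseteq> \<Union>QQ}"
  unfolding nu_tilde_def tilde_interval_def by simp

lemma ilen_sandwich:
  assumes "c < d" and inner: "{c<..<d} \<subseteq> S" and outer: "S \<subseteq> {c..d}"
  shows "ilen S = d - c"
proof -
  have ne: "{c<..<d} \<noteq> {}" "S \<noteq> {}" using assms by auto
  have bdd: "bdd_above S" "bdd_below S"
    using bdd_above_mono[OF _ outer] bdd_below_mono[OF _ outer] by simp_all
  have "Sup S \<le> d" using cSup_subset_mono[OF ne(2) _ outer] assms(1) by simp
  moreover have "d \<le> Sup S" using cSup_subset_mono[OF ne(1) bdd(1) inner] assms(1) by simp
  moreover have "c \<le> Inf S" using cInf_superset_mono[OF ne(2) _ outer] assms(1) by simp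
  moreover have "Inf S \<le> c" using cInf_superset_mono[OF ne(1) bdd(2) inner] assms(1) by simp
  ultimately show ?thesis by (simp add: ilen_def)
qed

lemma shell_int_interval_bounds:
  fixes a b :: int
  assumes "a < b" and "{real_of_int a<..<real_of_int b} \<subseteq> Q" and "Q \<subseteq> shell n"
  shows "2 ^ (n - 1) \<le> a" and "b \<le> 2 ^ n"
proof -
  have "real_of_int a + 1/2 \<in> shell n" "real_of_int b - 1/2 \<in> shell n"
    using assms by (auto simp: subset_iff)
  then have "real_of_int (2 ^ (n - 1)) < real_of_int (a + 1)"
    "real_of_int b < real_of_int (2 ^ n + 1)"
    by (auto simp: shell_def)
  then show "2 ^ (n - 1) \<le> a" "b \<le> 2 ^ n" by linarith+
qed

lemma tilde_interval_Icc_inter_shell: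
  fixes c d :: int
  assumes "2 ^ (n - 1) \<le> c" and "d \<le> 2 ^ n"
    and "d - c = int k * int n ^ 2" and "k \<ge> 1" and "n \<ge> 1"
  shows "tilde_interval n ({real_of_int c..real_of_int d} \<inter> shell n)"
    and "ilen ({real_of_int c..real_of_int d} \<inter> shell n) = real_of_int (d - c)"
proof -
  let ?J = "{real_of_int c..real_of_int d} \<inter> shell n"
  have "0 < int k * int n ^ 2" using assms(4,5) by simp
  then have cd: "c < d" using assms(3) by linarith
  have bounds: "(2::real) ^ (n - 1) \<le> real_of_int c" "real_of_int d \<le> (2::real) ^ n"
    using assms(1,2) by (metis of_int_le_iff of_int_numeral of_int_power)+
  have inner: "{real_of_int c<..<real_of_int d} \<subseteq> ?J"
  proof
    fix x assume "x \<in> {real_of_int c<..<real_of_int d}"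
    then have x: "real_of_int c < x" "x < real_of_int d" by simp_all
    with bounds have "2 ^ (n - 1) \<le> x" "x < 2 ^ n" by linarith+
    with x show "x \<in> ?J" by (simp add: shell_def)
  qed
  have outer: "?J \<subseteq> {real_of_int c..real_of_int d}" by blast
  show len: "ilen ?J = real_of_int (d - c)"
    using ilen_sandwich[OF _ inner outer] cd by simp
  have "int_interval ?J" unfolding int_interval_def using cd inner outer by blast
  moreover have "ilen ?J = real k * real n ^ 2"
    unfolding len assms(3) by simp
  ultimately show "tilde_interval n ?J" unfolding tilde_interval_def using assms(4) by blast
qed

lemma tilde_cover_long:
  fixes a b :: int
  assumes "n \<ge> 1" and "2 ^ (n - 1) \<le> a" and "b \<le> 2 ^ n" and "int n ^ 2 \<le> b - a"
  shows "\<exists>J1 J2. {real_of_int a..real_of_int b} \<inter> shell n \<subseteq> J1 \<union> J2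
    \<and> tilde_interval n J1 \<and> tilde_interval n J2
    \<and> ilen J1 \<le> real_of_int (b - a) \<and> ilen J2 \<le> real_of_int (b - a)"
proof -
  define m where "m = int n ^ 2"
  define k where "k = (b - a) div m"
  have m: "0 < m" using assms(1) by (simp add: m_def)
  have "0 < k" using assms(4) m unfolding k_def m_def by (simp add: pos_imp_zdiv_pos_iff)
  have "b - a = k * m + (b - a) mod m" by (simp add: k_def)
  moreover have "0 \<le> (b - a) mod m" "(b - a) mod m < m" using m by simp_all
  moreover have "m \<le> k * m" using \<open>0 < k\<close> m by simp
  ultimately have km: "k * m \<le> b - a" "b - a < 2 * (k * m)" by linarith+
  have k: "nat k \<ge> 1" using \<open>0 < k\<close> by simp
  have len: "(a + k * m) - a = int (nat k) * int n ^ 2" "b - (b - k * m) = int (nat k) * int n ^ 2"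
    using \<open>0 < k\<close> by (simp_all add: m_def)
  have bounds: "a + k * m \<le> 2 ^ n" "2 ^ (n - 1) \<le> b - k * m" using assms(2,3) km by linarith+
  define J1 where "J1 = {real_of_int a..real_of_int (a + k * m)} \<inter> shell n"
  define J2 where "J2 = {real_of_int (b - k * m)..real_of_int b} \<inter> shell n"
  note J1 = tilde_interval_Icc_inter_shell[OF assms(2) bounds(1) len(1) k assms(1), folded J1_def]
  note J2 = tilde_interval_Icc_inter_shell[OF bounds(2) assms(3) len(2) k assms(1), folded J2_def]
  have "{real_of_int a..real_of_int b} \<inter> shell n \<subseteq> J1 \<union> J2"
  proof
    fix y assume y: "y \<in> {real_of_int a..real_of_int b} \<inter> shell n"
    have "b - k * m \<le> a + k * m" using km by linarith
    then have "real_of_int (b - k * m) \<le> real_of_int (a + k * m)" by (simp only: of_int_le_iff)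
    then have "y \<le> real_of_int (a + k * m) \<or> real_of_int (b - k * m) \<le> y" by linarith
    then show "y \<in> J1 \<union> J2" using y unfolding J1_def J2_def by auto
  qed
  moreover have "real_of_int ((a + k * m) - a) \<le> real_of_int (b - a)"
    "real_of_int (b - (b - k * m)) \<le> real_of_int (b - a)"
    using km by (simp_all only: of_int_le_iff)
  ultimately show ?thesis using J1 J2 by metis
qed

lemma tilde_cover_short:
  fixes a b :: int
  assumes "n \<ge> 1" and "2 * real n ^ 2 \<le> 2 ^ n"
    and "2 ^ (n - 1) \<le> a" and "b \<le> 2 ^ n" and "b - a < int n ^ 2"
  shows "\<exists>J. {real_of_int a..real_of_int b} \<inter> shell n \<subseteq> J
    \<and> tilde_interval n J \<and> ilen J = real n ^ 2"
proof -
  define m where "m = int n ^ 2"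
  define c where "c = min a (2 ^ n - m)"
  have "real_of_int (2 * m) \<le> real_of_int (2 ^ n)"
    using assms(2) unfolding m_def by simp
  then have "2 * m \<le> 2 ^ n" by linarith
  moreover have "(2::int) ^ n = 2 * 2 ^ (n - 1)" using assms(1) by (cases n) simp_all
  ultimately have lo: "2 ^ (n - 1) \<le> c" using assms(3) by (simp add: c_def)
  have hi: "c + m \<le> 2 ^ n" by (simp add: c_def)
  have len: "(c + m) - c = int 1 * int n ^ 2" by (simp add: m_def)
  define J where "J = {real_of_int c..real_of_int (c + m)} \<inter> shell n"
  note J = tilde_interval_Icc_inter_shell[OF lo hi len _ assms(1), folded J_def]
  have "c \<le> a" "b \<le> c + m" using assms(4,5) by (auto simp: c_def m_def)
  then have "real_of_int c \<le> real_of_int a" "real_of_int b \<le> real_of_int (c + m)" by linarith+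
  then have "{real_of_int a..real_of_int b} \<inter> shell n \<subseteq> J" unfolding J_def by auto
  moreover have "real_of_int ((c + m) - c) = real n ^ 2" by (simp add: m_def)
  ultimately show ?thesis using J by auto
qed

lemma powr_cost_le:
  fixes m T l L \<rho> \<sigma> :: real
  assumes "0 \<le> \<rho>" and "\<rho> \<le> \<sigma>" and "0 < T" and "1 \<le> l" and "l \<le> T" and "0 \<le> L"
    and "L \<le> l \<or> L = m" and "(m / T) powr \<sigma> \<le> (1 / T) powr \<rho>"
  shows "(L / T) powr \<sigma> \<le> (l / T) powr \<rho>"
  using assms(7)
proof
  assume "L \<le> l"
  then have "L / T \<le> l / T" "l / T \<le> 1" using assms(3,5) by (simp_all add: divide_right_mono)
  moreover have "0 \<le> L / T" using assms(3,6) by simp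
  ultimately have "(L / T) powr \<sigma> \<le> (L / T) powr \<rho>" using assms(2) by (intro powr_mono') auto
  also have "\<dots> \<le> (l / T) powr \<rho>" using \<open>L / T \<le> l / T\<close> \<open>0 \<le> L / T\<close> assms(1) by (simp add: powr_mono2)
  finally show ?thesis .
next
  assume "L = m"
  have "1 / T \<le> l / T" using assms(3,4) by (simp add: divide_right_mono)
  then have "(1 / T) powr \<rho> \<le> (l / T) powr \<rho>" using assms(1,3) by (intro powr_mono2) auto
  with assms(8) show ?thesis unfolding \<open>L = m\<close> by (rule order.trans)
qed

lemma tilde_refinement:
  assumes "n \<ge> 1" and "2 * real n ^ 2 \<le> 2 ^ n" and "0 \<le> \<rho>" and "\<rho> \<le> \<sigma>"
    and "(real n ^ 2 / 2 ^ n) powr \<sigma> \<le> (1 / 2 ^ n) powr \<rho>"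
    and "int_interval Q" and "Q \<subseteq> shell n"
  shows "\<exists>F. finite F \<and> card F \<le> 2 \<and> Q \<subseteq> \<Union>F \<and>
    (\<forall>J\<in>F. tilde_interval n J \<and> (ilen J / 2 ^ n) powr \<sigma> \<le> (ilen Q / 2 ^ n) powr \<rho>)"
proof -
  obtain a b :: int where ab: "a < b" and inner: "{real_of_int a<..<real_of_int b} \<subseteq> Q"
    and outer: "Q \<subseteq> {real_of_int a..real_of_int b}"
    using assms(6) unfolding int_interval_def by blast
  have lenQ: "ilen Q = real_of_int (b - a)" using ilen_sandwich[OF _ inner outer] ab by simp
  note bounds = shell_int_interval_bounds[OF ab inner assms(7)]
  have Q_sub: "Q \<subseteq> {real_of_int a..real_of_int b} \<inter> shell n" using outer assms(7) by blast
  have "0 \<le> (2::int) ^ (n - 1)" by simp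
  then have "b - a \<le> 2 ^ n" using bounds by linarith
  then have le_T: "real_of_int (b - a) \<le> 2 ^ n" by (metis of_int_le_iff of_int_numeral of_int_power)
  have one_le: "1 \<le> real_of_int (b - a)" using ab by simp
  have cost: "(ilen J / 2 ^ n) powr \<sigma> \<le> (ilen Q / 2 ^ n) powr \<rho>"
    if "tilde_interval n J" and "ilen J \<le> real_of_int (b - a) \<or> ilen J = real n ^ 2" for J
  proof -
    have "0 \<le> ilen J" using that(1) unfolding tilde_interval_def by auto
    show ?thesis unfolding lenQ
      by (rule powr_cost_le[OF assms(3,4) _ one_le le_T \<open>0 \<le> ilen J\<close> that(2) assms(5)]) simp
  qed
  consider "int n ^ 2 \<le> b - a" | "b - a < int n ^ 2" by linarith
  then show ?thesis
  proof cases
    case 1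
    then obtain J1 J2 where cover: "{real_of_int a..real_of_int b} \<inter> shell n \<subseteq> J1 \<union> J2"
      and J1: "tilde_interval n J1" "ilen J1 \<le> real_of_int (b - a)"
      and J2: "tilde_interval n J2" "ilen J2 \<le> real_of_int (b - a)"
      using tilde_cover_long[OF assms(1) bounds] by blast
    have "card {J1, J2} \<le> 2" by (simp add: card_insert_if)
    moreover have "Q \<subseteq> \<Union>{J1, J2}" using Q_sub cover by auto
    moreover note cost[OF J1(1)] cost[OF J2(1)]
    ultimately show ?thesis using J1 J2 by (intro exI[of _ "{J1, J2}"]) auto
  next
    case 2
    then obtain J where cover: "{real_of_int a..real_of_int b} \<inter> shell n \<subseteq> J"
      and J: "tilde_interval n J" "ilen J = real n ^ 2"
      using tilde_cover_short[OF assms(1,2) bounds] by blast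
    have "Q \<subseteq> \<Union>{J}" using Q_sub cover by auto
    with J cost[OF J(1)] show ?thesis by (intro exI[of _ "{J}"]) simp
  qed
qed

lemma tilde_cover_of_cover:
  assumes "n \<ge> 1" and "2 * real n ^ 2 \<le> 2 ^ n" and "0 \<le> \<rho>" and "\<rho> \<le> \<sigma>"
    and "(real n ^ 2 / 2 ^ n) powr \<sigma> \<le> (1 / 2 ^ n) powr \<rho>"
    and "finite QQ" and "\<forall>Q\<in>QQ. int_interval Q \<and> Q \<subseteq> shell n" and "E \<inter> shell n \<subseteq> \<Union>QQ"
  shows "\<exists>JJ. finite JJ \<and> (\<forall>J\<in>JJ. tilde_interval n J) \<and> E \<inter> shell n \<subseteq> \<Union>JJ \<and>
    (\<Sum>J\<in>JJ. (ilen J / 2 ^ n) powr \<sigma>) \<le> 2 * (\<Sum>Q\<in>QQ. (ilen Q / 2 ^ n) powr \<rho>)"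
proof -
  obtain F where F: "\<And>Q. Q \<in> QQ \<Longrightarrow> finite (F Q) \<and> card (F Q) \<le> 2 \<and> Q \<subseteq> \<Union>(F Q) \<and>
    (\<forall>J\<in>F Q. tilde_interval n J \<and> (ilen J / 2 ^ n) powr \<sigma> \<le> (ilen Q / 2 ^ n) powr \<rho>)"
    using tilde_refinement[OF assms(1-5)] assms(7) by metis
  define JJ where "JJ = snd ` Sigma QQ F"
  let ?c = "\<lambda>\<tau> J. (ilen J / 2 ^ n) powr \<tau>"
  have fin: "finite (Sigma QQ F)" using assms(6) F by auto
  have "(\<Sum>J\<in>JJ. ?c \<sigma> J) \<le> (\<Sum>(Q, J)\<in>Sigma QQ F. ?c \<sigma> J)"
    unfolding JJ_def using sum_image_le[OF fin, of "?c \<sigma>" snd] by (simp add: case_prod_beta')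
  also have "\<dots> = (\<Sum>Q\<in>QQ. \<Sum>J\<in>F Q. ?c \<sigma> J)" using assms(6) F by (simp add: sum.Sigma)
  also have "\<dots> \<le> (\<Sum>Q\<in>QQ. of_nat (card (F Q)) * ?c \<rho> Q)"
    using F by (intro sum_mono sum_bounded_above) auto
  also have "\<dots> \<le> (\<Sum>Q\<in>QQ. 2 * ?c \<rho> Q)"
    using F by (intro sum_mono mult_right_mono) auto
  finally have "(\<Sum>J\<in>JJ. ?c \<sigma> J) \<le> 2 * (\<Sum>Q\<in>QQ. ?c \<rho> Q)" by (simp add: sum_distrib_left)
  moreover have "finite JJ" using fin by (simp add: JJ_def)
  moreover have "\<forall>J\<in>JJ. tilde_interval n J"
  proof
    fix J assume "J \<in> JJ"
    then obtain Q where "Q \<in> QQ" "J \<in> F Q" unfolding JJ_def by auto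
    then show "tilde_interval n J" using F by blast
  qed
  moreover have "\<Union>QQ \<subseteq> \<Union>JJ"
  proof
    fix y assume "y \<in> \<Union>QQ"
    then obtain Q where "Q \<in> QQ" "y \<in> Q" by blast
    then obtain J where "J \<in> F Q" "y \<in> J" using F by blast
    then have "(Q, J) \<in> Sigma QQ F" using \<open>Q \<in> QQ\<close> by simp
    then have "J \<in> JJ" unfolding JJ_def by (rule rev_image_eqI) simp
    then show "y \<in> \<Union>JJ" using \<open>y \<in> J\<close> by blast
  qed
  ultimately show ?thesis using assms(8) by (intro exI[of _ JJ]) auto
qed

lemma ennreal_le_const_mult_Inf:
  fixes a c :: ennreal
  assumes "c \<noteq> 0" and "c \<noteq> top" and "\<And>x. x \<in> X \<Longrightarrow> a \<le> c * x"
  shows "a \<le> c * Inf X"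
proof -
  have "a / c \<le> Inf X"
  proof (rule Inf_greatest)
    fix x assume "x \<in> X"
    then have "a \<le> x * c" using assms(3) by (metis mult.commute)
    then have "a / c \<le> x * c / c" by (rule divide_right_mono_ennreal)
    also have "\<dots> = x" using assms(1,2) by (rule ennreal_mult_divide_eq)
    finally show "a / c \<le> x" .
  qed
  then have "c * (a / c) \<le> c * Inf X" by (rule mult_left_mono) simp
  moreover have "c * (a / c) = a"
    using assms(1,2) by (simp add: ennreal_times_divide mult.commute[of c a] ennreal_mult_divide_eq)
  ultimately show ?thesis by simp
qed

lemma nu_tilde_le_two_nu:
  assumes "n \<ge> 1" and "2 * real n ^ 2 \<le> 2 ^ n" and "0 \<le> \<rho>" and "\<rho> \<le> \<sigma>"
    and "(real n ^ 2 / 2 ^ n) powr \<sigma> \<le> (1 / 2 ^ n) powr \<rho>"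
  shows "nu_tilde n \<sigma> E \<le> 2 * nu n \<rho> E"
  unfolding nu_def
proof (rule ennreal_le_const_mult_Inf)
  fix x assume "x \<in> {ennreal (\<Sum>Q\<in>QQ. (ilen Q / 2 ^ n) powr \<rho>) | QQ.
    finite QQ \<and> (\<forall>Q\<in>QQ. int_interval Q \<and> Q \<subseteq> shell n) \<and> E \<inter> shell n \<subseteq> \<Union>QQ}"
  then obtain QQ where x: "x = ennreal (\<Sum>Q\<in>QQ. (ilen Q / 2 ^ n) powr \<rho>)"
    and QQ: "finite QQ" "\<forall>Q\<in>QQ. int_interval Q \<and> Q \<subseteq> shell n" "E \<inter> shell n \<subseteq> \<Union>QQ"
    by blast
  obtain JJ where JJ: "finite JJ" "\<forall>J\<in>JJ. tilde_interval n J" "E \<inter> shell n \<subseteq> \<Union>JJ"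
    and sum_le: "(\<Sum>J\<in>JJ. (ilen J / 2 ^ n) powr \<sigma>) \<le> 2 * (\<Sum>Q\<in>QQ. (ilen Q / 2 ^ n) powr \<rho>)"
    using tilde_cover_of_cover[OF assms QQ] by blast
  have "nu_tilde n \<sigma> E \<le> ennreal (\<Sum>J\<in>JJ. (ilen J / 2 ^ n) powr \<sigma>)"
    unfolding nu_tilde_eq using JJ by (intro Inf_lower CollectI exI[of _ JJ]) simp
  also have "\<dots> \<le> ennreal (2 * (\<Sum>Q\<in>QQ. (ilen Q / 2 ^ n) powr \<rho>))"
    using sum_le by (rule ennreal_leI)
  also have "\<dots> = 2 * x" unfolding x by (simp add: ennreal_mult sum_nonneg)
  finally show "nu_tilde n \<sigma> E \<le> 2 * x" .
qed simp_all

lemma nu_le_nu_tilde: "nu n \<rho> E \<le> nu_tilde n \<rho> E"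
  unfolding nu_def nu_tilde_def by (rule Inf_superset_mono) blast

lemma nu_Suc_less_top: "nu (Suc n) \<rho> E < \<infinity>"
proof -
  have "int_interval (shell (Suc n))"
    unfolding int_interval_def shell_def by (intro exI[of _ "2 ^ n"] exI[of _ "2 ^ Suc n"]) auto
  then have "nu (Suc n) \<rho> E \<le> ennreal (\<Sum>Q\<in>{shell (Suc n)}. (ilen Q / 2 ^ Suc n) powr \<rho>)"
    unfolding nu_def by (intro Inf_lower) blast
  also have "\<dots> < \<infinity>" by simp
  finally show ?thesis .
qed

lemma suminf_nu_less_top_of_nu_tilde:
  assumes "N \<ge> 1" and "(\<Sum>k. nu_tilde (k + N) \<rho> E) < \<infinity>"
  shows "(\<Sum>n. nu (Suc n) \<rho> E) < \<infinity>"
proof -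
  have tail_le: "(\<Sum>k. nu (Suc (k + (N - 1))) \<rho> E) \<le> (\<Sum>k. nu_tilde (k + N) \<rho> E)"
    using assms(1) by (intro suminf_le nu_le_nu_tilde[THEN order.trans] summableI) simp
  have "(\<Sum>n. nu (Suc n) \<rho> E) = (\<Sum>k. nu (Suc (k + (N - 1))) \<rho> E) + (\<Sum>n<N - 1. nu (Suc n) \<rho> E)"
    by (rule suminf_offset) (rule summableI)
  also have "\<dots> < \<infinity>" using assms(2) tail_le nu_Suc_less_top by (simp add: ennreal_sum_less_top)
  finally show ?thesis .
qed

lemma nu_tilde_tail_less_top:
  assumes "0 \<le> \<rho>" and "0 < e" and "(\<Sum>n. nu (Suc n) \<rho> E) < \<infinity>"
  shows "\<exists>N\<ge>1. (\<Sum>k. nu_tilde (k + N) (\<rho> + e) E) < \<infinity>"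
proof -
  have "eventually (\<lambda>n. 2 * real n ^ 2 \<le> 2 ^ n) at_top" by real_asymp
  moreover have "eventually (\<lambda>n. (real n ^ 2 / 2 ^ n) powr (\<rho> + e) \<le> (1 / 2 ^ n) powr \<rho>) at_top"
    using assms(2) by real_asymp
  moreover have "eventually (\<lambda>n::nat. n \<ge> 1) at_top" by (rule eventually_ge_at_top)
  ultimately have "eventually (\<lambda>n. 2 * real n ^ 2 \<le> 2 ^ n \<and>
      (real n ^ 2 / 2 ^ n) powr (\<rho> + e) \<le> (1 / 2 ^ n) powr \<rho> \<and> n \<ge> 1) at_top"
    by (intro eventually_conj)
  then obtain N where N: "\<And>n. n \<ge> N \<Longrightarrow> 2 * real n ^ 2 \<le> 2 ^ n \<and>
      (real n ^ 2 / 2 ^ n) powr (\<rho> + e) \<le> (1 / 2 ^ n) powr \<rho> \<and> n \<ge> 1"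
    unfolding eventually_at_top_linorder by blast
  have "nu_tilde (k + Suc N) (\<rho> + e) E \<le> 2 * nu (Suc (k + N)) \<rho> E" for k
    using N[of "k + Suc N"] assms(1,2) nu_tilde_le_two_nu[of "k + Suc N" \<rho> "\<rho> + e" E] by simp
  then have "(\<Sum>k. nu_tilde (k + Suc N) (\<rho> + e) E) \<le> (\<Sum>k. 2 * nu (Suc (k + N)) \<rho> E)"
    by (intro suminf_le summableI)
  also have "\<dots> = 2 * (\<Sum>k. nu (Suc (k + N)) \<rho> E)" by (rule ennreal_suminf_cmult)
  also have "\<dots> \<le> 2 * (\<Sum>n. nu (Suc n) \<rho> E)"
    using suminf_offset[of "\<lambda>n. nu (Suc n) \<rho> E" N] by (intro mult_left_mono) (auto intro: summableI)
  also have "\<dots> < \<infinity>" using assms(3) by (simp add: ennreal_mult_less_top)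
  finally show ?thesis by (intro exI[of _ "Suc N"]) simp
qed

lemma Inf_ereal_eq_if_approximable:
  fixes P Q :: "real \<Rightarrow> bool"
  assumes "\<And>x. Q x \<Longrightarrow> P x" and "\<And>x e. P x \<Longrightarrow> 0 < e \<Longrightarrow> Q (x + e)"
  shows "Inf {ereal x | x. P x} = Inf {ereal x | x. Q x}"
proof (rule antisym)
  show "Inf {ereal x | x. P x} \<le> Inf {ereal x | x. Q x}"
    using assms(1) by (intro Inf_superset_mono) blast
  show "Inf {ereal x | x. Q x} \<le> Inf {ereal x | x. P x}"
  proof (rule Inf_greatest)
    fix y assume "y \<in> {ereal x | x. P x}"
    then obtain x where "y = ereal x" "P x" by blast
    have "Inf {ereal x | x. Q x} \<le> ereal x + ereal e" if "0 < e" for e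
      using assms(2)[OF \<open>P x\<close> that] by (intro Inf_lower) auto
    then show "Inf {ereal x | x. Q x} \<le> y" unfolding \<open>y = ereal x\<close> by (rule ereal_le_epsilon2)
  qed
qed

theorem lemma2:
  fixes E :: "real set"
  assumes "E \<subseteq> {0..}"
  shows "DimH E = Inf {ereal \<rho> | \<rho>. \<rho> \<ge> 0 \<and>
           (\<exists>N\<ge>1. (\<Sum>k. nu_tilde (k + N) \<rho> E) < \<infinity>)}"
  unfolding DimH_def
proof (rule Inf_ereal_eq_if_approximable)
  show "\<rho> \<ge> 0 \<and> (\<Sum>n. nu (Suc n) \<rho> E) < \<infinity>"
    if "\<rho> \<ge> 0 \<and> (\<exists>N\<ge>1. (\<Sum>k. nu_tilde (k + N) \<rho> E) < \<infinity>)" for \<rho>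
    using that suminf_nu_less_top_of_nu_tilde by blast
  show "\<rho> + e \<ge> 0 \<and> (\<exists>N\<ge>1. (\<Sum>k. nu_tilde (k + N) (\<rho> + e) E) < \<infinity>)"
    if "\<rho> \<ge> 0 \<and> (\<Sum>n. nu (Suc n) \<rho> E) < \<infinity>" and "0 < e" for \<rho> e
    using that nu_tilde_tail_less_top by auto
qed

end
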